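(* Neither the complex tame Butcher group $\mathcal B^{\mathbb C}_{TM}$ nor the tame Butcher group $\mathcal B_{TM}$ is locally exponential, i.e. for neither group does the Lie group exponential map restrict to a diffeomorphism from an open $0$-neighbourhood in the Lie algebra onto an open $e$-neighbourhood. More precisely, for every $\varepsilon\in\mathbb R\setminus\{0\}$ the element $a_\varepsilon\in\mathcal B_{TM}$ is not in the image of $\exp_{\mathcal B_{TM}}$, while $\mathbb R\to\mathcal B_{TM}$, $\varepsilon\mapsto a_\varepsilon$ ($a_0:=e$) is a continuous curve through $e$; hence the image of $\exp_{\mathcal B_{TM}}$ contains no identity neighbourhood.
   Context: $\mathcal T_0$ is the set of rooted trees plus the empty tree $\emptyset$; $\bullet$ is the one-vertex tree; $|\tau|$ the number of vertices. $\mathcal B^{\mathbb C}_{TM}$ is the complex tame Butcher group: maps $a\colon\mathcal T_0\to\mathbb C$ with $a(\emptyset)=1$ and $|a(\tau)|\le CK^{|\tau|}$ for some $C,K>0$, with product $(a\cdot b)(\tau)=\sum_{s\in\mathrm{OST}(\tau)}b(s_\tau)\prod_{\theta\in\tau\setminus s}a(\theta)$ (sum over ordered subtrees) and unit $e$ ($e(\emptyset)=1$, else 0); $\mathcal B_{TM}$ its real-valued subgroup. They are analytic Lie groups modelled on the Silva spaces $M^*_{\mathbb K}=\{a\in\bigcup_k\mathbb K^{\mathcal T_0}(\omega_k)\mid a(\emptyset)=0\}$ (inductive limit of the Banach spaces $\mathbb K^{\mathcal T_0}(\omega_k)=\{a\mid\sup_\tau|a(\tau)|2^{-k|\tau|}<\infty\}$)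 with global chart $a\mapsto a-e$. The Lie group exponential $\exp\colon\mathbf L(G)\to G$ is the map such that $t\mapsto\exp(tx)$ is a one-parameter group with derivative $x$ at $0$. For $\varepsilon\in\mathbb R\setminus\{0\}$, $a_\varepsilon(\emptyset)=1$, $a_\varepsilon(\bullet)=\varepsilon$ and $a_\varepsilon(\tau)=0$ for all other trees $\tau$. *)

theory Defs
  imports "HOL-Analysis.Analysis" "HOL-Library.Multiset"
begin

text \<open>The set T_0 of rooted trees plus the empty tree is
  modelled by the type rtree option, with None the empty tree.\<close>

datatype rtree = Node "rtree multiset"

definition bullet :: rtree where "bullet = Node {#}"

primrec nverts :: "rtree \<Rightarrow> nat" where
  "nverts (Node M) = 1 + sum_mset (image_mset nverts M)"

definition tsize :: "rtree option \<Rightarrow> nat" where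
  "tsize t = (case t of None \<Rightarrow> 0 | Some \<tau> \<Rightarrow> nverts \<tau>)"

text \<open>For a non-empty subtree s of tau containing the root, we record the pair
  (s, tau minus s) where tau minus s is the multiset (forest) of trees obtained
  by removing the vertices of s.  Each subset of vertices (i.e. each ordered
  subtree) is listed once, so symmetric choices occur with multiplicity.
  For a child c of the root there are the choices: cut c entirely
  (contributing c to the forest), or keep a root-containing subtree of c.\<close>

definition child_opts ::
  "rtree \<Rightarrow> (rtree \<times> rtree multiset) multiset \<Rightarrow> (rtree option \<times> rtree multiset) multiset" where
  "child_opts c cs = {#(None, {#c#})#} + image_mset (\<lambda>(s, f). (Some s, f)) cs"

fun combine_list ::
  "(rtree option \<times> rtree multiset) multiset list \<Rightarrow> (rtree multiset \<times> rtree multiset) multiset" where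
  "combine_list [] = {#({#}, {#})#}"
| "combine_list (X # Xs) =
     sum_mset (image_mset (\<lambda>(o', f). image_mset (\<lambda>(S, F).
        ((case o' of None \<Rightarrow> {#} | Some s \<Rightarrow> {#s#}) + S, f + F)) (combine_list Xs)) X)"

definition combine ::
  "(rtree option \<times> rtree multiset) multiset multiset \<Rightarrow> (rtree multiset \<times> rtree multiset) multiset" where
  "combine M = combine_list (SOME xs. mset xs = M)"

primrec rcuts :: "rtree \<Rightarrow> (rtree \<times> rtree multiset) multiset" where
  "rcuts (Node M) = image_mset (\<lambda>(S, F). (Node S, F))
      (combine (image_mset (\<lambda>c. child_opts c (rcuts c)) M))"

text \<open>(a.b)(tau) = sum over ordered subtrees s of tau of b(s) * prod over theta in
  tau minus s of a(theta).  The empty subtree contributes b(empty) * a(tau).\<close>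

definition bmult :: "(rtree option \<Rightarrow> 'k::real_normed_field) \<Rightarrow> (rtree option \<Rightarrow> 'k) \<Rightarrow> rtree option \<Rightarrow> 'k" where
  "bmult a b t = (case t of None \<Rightarrow> b None
     | Some \<tau> \<Rightarrow> b None * a (Some \<tau>) +
         (\<Sum>(s, F) \<in># rcuts \<tau>. b (Some s) * (\<Prod>\<theta> \<in># F. a (Some \<theta>))))"

definition bunit :: "rtree option \<Rightarrow> 'k::real_normed_field" where
  "bunit t = (if t = None then 1 else 0)"

definition tame :: "(rtree option \<Rightarrow> 'k::real_normed_field) \<Rightarrow> bool" where
  "tame a \<longleftrightarrow> (\<exists>C K. C > 0 \<and> K > 0 \<and> (\<forall>t. norm (a t) \<le> C * K ^ tsize t))"

definition BTM :: "(rtree option \<Rightarrow> 'k::real_normed_field) set" where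
  "BTM = {a. a None = 1 \<and> tame a}"

definition wnorm :: "nat \<Rightarrow> (rtree option \<Rightarrow> 'k::real_normed_field) \<Rightarrow> real" where
  "wnorm k a = (SUP t. norm (a t) / 2 ^ (k * tsize t))"

definition Estep :: "nat \<Rightarrow> (rtree option \<Rightarrow> 'k::real_normed_field) set" where
  "Estep k = {a. a None = 0 \<and> bdd_above (range (\<lambda>t. norm (a t) / 2 ^ (k * tsize t)))}"

definition Mstar :: "(rtree option \<Rightarrow> 'k::real_normed_field) set" where
  "Mstar = (\<Union>k. Estep k)"

text \<open>Inductive limit topology: U is open iff its trace on every step Banach
  space is open for the weighted sup norm (for Silva spaces the locally convex
  inductive limit topology coincides with this final topology).\<close>
definition openM :: "(rtree option \<Rightarrow> 'k::real_normed_field) set \<Rightarrow> bool" where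
  "openM U \<longleftrightarrow> U \<subseteq> Mstar \<and>
     (\<forall>k. \<forall>a \<in> U \<inter> Estep k. \<exists>r>0. \<forall>b \<in> Estep k.
        wnorm k (\<lambda>t. b t - a t) < r \<longrightarrow> b \<in> U)"

definition tendstoM :: "('x \<Rightarrow> rtree option \<Rightarrow> 'k::real_normed_field) \<Rightarrow> (rtree option \<Rightarrow> 'k) \<Rightarrow> 'x filter \<Rightarrow> bool" where
  "tendstoM f x F \<longleftrightarrow> (\<forall>U. openM U \<longrightarrow> x \<in> U \<longrightarrow> eventually (\<lambda>y. f y \<in> U) F)"

definition chart :: "(rtree option \<Rightarrow> 'k::real_normed_field) \<Rightarrow> rtree option \<Rightarrow> 'k" where
  "chart a = (\<lambda>t. a t - bunit t)"

definition openG :: "(rtree option \<Rightarrow> 'k::real_normed_field) set \<Rightarrow> bool" where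
  "openG V \<longleftrightarrow> V \<subseteq> BTM \<and> openM (chart ` V)"

definition has_derivM :: "(real \<Rightarrow> rtree option \<Rightarrow> 'k::real_normed_field) \<Rightarrow> (rtree option \<Rightarrow> 'k) \<Rightarrow> real \<Rightarrow> bool" where
  "has_derivM c v t \<longleftrightarrow>
     tendstoM (\<lambda>h. \<lambda>s. inverse h *\<^sub>R (c (t + h) s - c t s)) v (at 0)"

definition C1M :: "(real \<Rightarrow> rtree option \<Rightarrow> 'k::real_normed_field) \<Rightarrow> bool" where
  "C1M c \<longleftrightarrow> (\<forall>t. c t \<in> Mstar) \<and>
     (\<exists>c'. (\<forall>t. c' t \<in> Mstar \<and> has_derivM c (c' t) t) \<and> (\<forall>t. tendstoM c' (c' t) (at t)))"

text \<open>x is mapped to g by the Lie group exponential: there is a (C^1, hence smooth)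
  one-parameter group gamma with derivative x at 0 and gamma(1) = g.\<close>
definition lie_exp_rel :: "(rtree option \<Rightarrow> 'k::real_normed_field) \<Rightarrow> (rtree option \<Rightarrow> 'k) \<Rightarrow> bool" where
  "lie_exp_rel x g \<longleftrightarrow> x \<in> Mstar \<and> (\<exists>\<gamma>.
      (\<forall>t. \<gamma> t \<in> BTM) \<and> \<gamma> 0 = bunit \<and> (\<forall>s t. \<gamma> (s + t) = bmult (\<gamma> s) (\<gamma> t)) \<and>
      C1M (\<lambda>t. chart (\<gamma> t)) \<and> has_derivM (\<lambda>t. chart (\<gamma> t)) x 0 \<and> \<gamma> 1 = g)"

definition exp_image :: "(rtree option \<Rightarrow> 'k::real_normed_field) set" where
  "exp_image = {g. \<exists>x. lie_exp_rel x g}"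

definition aeps :: "real \<Rightarrow> rtree option \<Rightarrow> 'k::real_normed_field" where
  "aeps \<epsilon> t = (case t of None \<Rightarrow> 1 | Some \<tau> \<Rightarrow> if \<tau> = bullet then of_real \<epsilon> else 0)"

end

theory Submission
  imports Defs
begin

(* Let b_n be the tree whose root carries n leaves, so b_0 is the one-vertex tree. The ordered
   subtrees of b_n are the b_j, each occurring (n choose j) times with n - j cut-off leaves. Hence
   along a one-parameter group gamma with gamma'(0) = x the coordinates g_n(t) = gamma(t)(b_n) satisfy
   g_n' = sum_j (n choose j) x(b_j) g_0^(n-j), so g_0(t) = t x(b_0) and every g_n is an explicit
   polynomial in t. If gamma(1) = a_eps, then x(b_0) = eps and g_n(1) = 0 for n > 0; in terms of
   A(z) = sum_j x(b_j) z^j / j! this says A(z) (exp(eps z) - 1) / (eps z) = eps. Tameness of x makes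
   A entire, but the left-hand side vanishes at z = 2 pi i / eps. As eps |-> a_eps is continuous with
   a_0 = e, every identity neighbourhood contains some a_eps with eps <> 0. *)

section \<open>Bushy trees and their ordered subtrees\<close>

definition bushy :: "nat \<Rightarrow> rtree" where
  "bushy n = Node (replicate_mset n bullet)"

lemma bushy_0 [simp]: "bushy 0 = bullet"
  by (simp add: bushy_def bullet_def)

lemma bushy_neq_bullet: "n \<noteq> 0 \<Longrightarrow> bushy n \<noteq> bullet"
  by (simp add: bushy_def bullet_def)

lemma tsize_bushy: "tsize (Some (bushy n)) = Suc n"
  by (simp add: tsize_def bushy_def bullet_def)

lemma child_opts_bullet:
  "child_opts bullet (rcuts bullet) = {#(None, {#bullet#}), (Some bullet, {#})#}"
  by (simp add: child_opts_def bullet_def combine_def)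

lemma combine_replicate_mset: "combine (replicate_mset n X) = combine_list (replicate n X)"
proof -
  have "xs = replicate n X" if "mset xs = replicate_mset n X" for xs
    by (metis that in_multiset_in_set replicate_eqI set_mset_replicate_mset_subset size_mset
        size_replicate_mset empty_iff singletonD)
  then show ?thesis
    unfolding combine_def by (metis (mono_tags) mset_replicate someI)
qed

lemma sum_choose_Suc:
  fixes \<psi> :: "nat \<Rightarrow> 'a::comm_semiring_1"
  shows "(\<Sum>j\<le>Suc n. of_nat (Suc n choose j) * \<psi> j) =
     (\<Sum>j\<le>n. of_nat (n choose j) * \<psi> j) + (\<Sum>j\<le>n. of_nat (n choose j) * \<psi> (Suc j))"
proof -
  have "(\<Sum>j\<le>Suc n. of_nat (Suc n choose j) * \<psi> j) =
      \<psi> 0 + (\<Sum>j\<le>n. of_nat (n choose Suc j) * \<psi> (Suc j)) + (\<Sum>j\<le>n. of_nat (n choose j) * \<psi> (Suc j))"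
    by (subst sum.atMost_Suc_shift) (simp add: sum.distrib algebra_simps)
  also have "\<psi> 0 + (\<Sum>j\<le>n. of_nat (n choose Suc j) * \<psi> (Suc j)) = (\<Sum>j\<le>n. of_nat (n choose j) * \<psi> j)"
  proof -
    have "(\<Sum>j\<le>n. of_nat (n choose Suc j) * \<psi> (Suc j)) = (\<Sum>j<n. of_nat (n choose Suc j) * \<psi> (Suc j))"
      by (simp add: binomial_eq_0 flip: lessThan_Suc_atMost)
    then show ?thesis
      by (simp add: sum.atMost_shift)
  qed
  finally show ?thesis .
qed

lemma sum_combine_list_leaves:
  fixes \<phi> :: "rtree multiset \<times> rtree multiset \<Rightarrow> 'a::comm_semiring_1"
  shows "(\<Sum>p \<in># combine_list (replicate n {#(None, {#bullet#}), (Some bullet, {#})#}). \<phi> p) =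
    (\<Sum>j\<le>n. of_nat (n choose j) * \<phi> (replicate_mset j bullet, replicate_mset (n - j) bullet))"
proof (induction n arbitrary: \<phi>)
  case 0
  then show ?case by simp
next
  case (Suc n)
  show ?case
    using Suc.IH[of "\<lambda>(S, F). \<phi> (S, add_mset bullet F)"] Suc.IH[of "\<lambda>(S, F). \<phi> (add_mset bullet S, F)"]
      sum_choose_Suc[of n "\<lambda>j. \<phi> (replicate_mset j bullet, replicate_mset (Suc n - j) bullet)"]
    by (simp add: multiset.map_comp o_def case_prod_unfold Suc_diff_le)
qed

lemma sum_rcuts_bushy:
  fixes \<phi> :: "rtree \<Rightarrow> rtree multiset \<Rightarrow> 'a::comm_semiring_1"
  shows "(\<Sum>(s, F) \<in># rcuts (bushy n). \<phi> s F) =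
    (\<Sum>j\<le>n. of_nat (n choose j) * \<phi> (bushy j) (replicate_mset (n - j) bullet))"
proof -
  have "rcuts (bushy n) = image_mset (\<lambda>(S, F). (Node S, F))
      (combine_list (replicate n {#(None, {#bullet#}), (Some bullet, {#})#}))"
    by (simp add: bushy_def child_opts_bullet combine_replicate_mset)
  then show ?thesis
    using sum_combine_list_leaves[of "\<lambda>(S, F). \<phi> (Node S) F" n]
    by (simp add: multiset.map_comp o_def case_prod_unfold bushy_def)
qed

lemma Estep_diff:
  assumes a: "a \<in> Estep k" and b: "b \<in> Estep k"
  shows "(\<lambda>t. b t - a t) \<in> Estep k"
proof -
  obtain Ba where Ba: "\<And>t. norm (a t) / 2 ^ (k * tsize t) \<le> Ba"
    using a by (auto simp: Estep_def bdd_above_def)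
  obtain Bb where Bb: "\<And>t. norm (b t) / 2 ^ (k * tsize t) \<le> Bb"
    using b by (auto simp: Estep_def bdd_above_def)
  have "norm (b t - a t) / 2 ^ (k * tsize t) \<le> Bb + Ba" for t
  proof -
    have "norm (b t - a t) / 2 ^ (k * tsize t) \<le> (norm (b t) + norm (a t)) / 2 ^ (k * tsize t)"
      by (intro divide_right_mono norm_triangle_ineq4) simp
    also have "\<dots> \<le> Bb + Ba"
      using Ba[of t] Bb[of t] by (simp add: add_divide_distrib)
    finally show ?thesis .
  qed
  then have "bdd_above (range (\<lambda>t. norm (b t - a t) / 2 ^ (k * tsize t)))"
    by (rule bdd_aboveI2)
  then show ?thesis
    using a b by (simp add: Estep_def)
qed

lemma norm_le_wnorm: "a \<in> Estep k \<Longrightarrow> norm (a t) / 2 ^ (k * tsize t) \<le> wnorm k a"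
  unfolding wnorm_def Estep_def by (auto intro: cSUP_upper)

lemma openM_coordinate_ball: "openM {b \<in> Mstar. dist (b t) c < \<delta>}"
  unfolding openM_def
proof (intro conjI allI ballI)
  fix k a assume a: "a \<in> {b \<in> Mstar. dist (b t) c < \<delta>} \<inter> Estep k"
  define w :: real where "w = 2 ^ (k * tsize t)"
  have "w > 0"
    by (simp add: w_def)
  show "\<exists>r>0. \<forall>b\<in>Estep k. wnorm k (\<lambda>t. b t - a t) < r \<longrightarrow> b \<in> {b \<in> Mstar. dist (b t) c < \<delta>}"
  proof (intro exI[of _ "(\<delta> - dist (a t) c) / w"] conjI ballI impI)
    show "(\<delta> - dist (a t) c) / w > 0"
      using a \<open>w > 0\<close> by simp
    fix b assume b: "b \<in> Estep k" and lt: "wnorm k (\<lambda>t. b t - a t) < (\<delta> - dist (a t) c) / w"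
    have "norm (b t - a t) / w \<le> wnorm k (\<lambda>t. b t - a t)"
      unfolding w_def using a b by (intro norm_le_wnorm Estep_diff) auto
    with lt have "norm (b t - a t) / w < (\<delta> - dist (a t) c) / w"
      by linarith
    with \<open>w > 0\<close> have "dist (b t) (a t) < \<delta> - dist (a t) c"
      by (simp add: dist_norm divide_less_cancel)
    then show "b \<in> {b \<in> Mstar. dist (b t) c < \<delta>}"
      using b dist_triangle[of "b t" c "a t"] by (auto simp: Mstar_def)
  qed
qed simp

lemma tendstoM_coordinate:
  assumes "x \<in> Mstar" and "tendstoM f x F"
  shows "((\<lambda>y. f y t) \<longlongrightarrow> x t) F"
proof (rule tendstoI)
  fix \<delta> :: real assume "\<delta> > 0"
  have "x \<in> {b \<in> Mstar. dist (b t) (x t) < \<delta>}"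
    using assms(1) \<open>\<delta> > 0\<close> by simp
  moreover have "openM U \<Longrightarrow> x \<in> U \<Longrightarrow> eventually (\<lambda>y. f y \<in> U) F" for U
    using assms(2) by (simp add: tendstoM_def)
  ultimately have "eventually (\<lambda>y. f y \<in> {b \<in> Mstar. dist (b t) (x t) < \<delta>}) F"
    using openM_coordinate_ball by blast
  then show "eventually (\<lambda>y. dist (f y t) (x t) < \<delta>) F"
    by (rule eventually_mono) simp
qed

section \<open>One-parameter groups\<close>

lemma has_vector_derivative_if_quotient_tendsto:
  fixes f :: "real \<Rightarrow> 'a::real_normed_vector"
  assumes "((\<lambda>h. inverse h *\<^sub>R (f (t + h) - f t)) \<longlongrightarrow> D) (at 0)"
  shows "(f has_vector_derivative D) (at t)"
  unfolding has_vector_derivative_def has_derivative_at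
proof (intro conjI)
  show "bounded_linear (\<lambda>h. h *\<^sub>R D)"
    by (rule bounded_linear_scaleR_left)
  have "eventually (\<lambda>h. norm (inverse h *\<^sub>R (f (t + h) - f t) - D) =
      norm (f (t + h) - f t - h *\<^sub>R D) / norm h) (at (0::real))"
  proof (rule eventually_mono[OF eventually_neq_at_within[of 0 0 UNIV]])
    fix h :: real assume "h \<noteq> 0"
    then have "inverse h *\<^sub>R (f (t + h) - f t) - D = inverse h *\<^sub>R (f (t + h) - f t - h *\<^sub>R D)"
      by (simp add: scaleR_diff_right)
    then show "norm (inverse h *\<^sub>R (f (t + h) - f t) - D) = norm (f (t + h) - f t - h *\<^sub>R D) / norm h"
      by (simp add: divide_inverse mult.commute abs_inverse)
  qed
  with tendsto_norm_zero[OF LIM_zero[OF assms]]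
  show "(\<lambda>h. norm (f (t + h) - f t - h *\<^sub>R D) / norm h) \<midarrow>0\<rightarrow> 0"
    by (rule Lim_transform_eventually)
qed

lemma same_vector_derivative_imp_same_increment:
  fixes f g :: "real \<Rightarrow> 'a::real_normed_vector"
  assumes "\<And>t. (f has_vector_derivative D t) (at t)" and "\<And>t. (g has_vector_derivative D t) (at t)"
  shows "f t - f 0 = g t - g 0"
proof -
  have "((\<lambda>t. f t - g t) has_vector_derivative 0) (at t)" for t
    using has_vector_derivative_diff[OF assms(1,2)] by simp
  then obtain c where "\<And>t. f t - g t = c"
    using has_vector_derivative_zero_constant[of UNIV "\<lambda>t. f t - g t"] by auto
  from this[of t] this[of 0] show ?thesis
    by (simp add: algebra_simps)
qed

(* Since gamma 0 = bunit vanishes on non-empty trees, tangent says that x is the derivative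
   of gamma at 0. *)
locale one_parameter_group =
  fixes \<gamma> :: "real \<Rightarrow> rtree option \<Rightarrow> 'k::real_normed_field" and x :: "rtree option \<Rightarrow> 'k"
  assumes empty_tree: "\<gamma> t None = 1"
    and zero: "\<gamma> 0 = bunit"
    and add: "\<gamma> (s + t) = bmult (\<gamma> s) (\<gamma> t)"
    and tangent: "((\<lambda>h. inverse h *\<^sub>R \<gamma> h (Some \<tau>)) \<longlongrightarrow> x (Some \<tau>)) (at 0)"
begin

lemma bushy_has_vector_derivative:
  "((\<lambda>t. \<gamma> t (Some (bushy n))) has_vector_derivative
      (\<Sum>j\<le>n. of_nat (n choose j) * x (Some (bushy j)) * \<gamma> t (Some bullet) ^ (n - j))) (at t)"
proof (rule has_vector_derivative_if_quotient_tendsto)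
  have increment: "\<gamma> (t + h) (Some (bushy n)) - \<gamma> t (Some (bushy n)) =
      (\<Sum>j\<le>n. of_nat (n choose j) * \<gamma> h (Some (bushy j)) * \<gamma> t (Some bullet) ^ (n - j))" for h
    by (simp add: add bmult_def empty_tree sum_rcuts_bushy mult.assoc)
  have "((\<lambda>h. \<Sum>j\<le>n. of_nat (n choose j) * (inverse h *\<^sub>R \<gamma> h (Some (bushy j))) *
        \<gamma> t (Some bullet) ^ (n - j))
      \<longlongrightarrow> (\<Sum>j\<le>n. of_nat (n choose j) * x (Some (bushy j)) * \<gamma> t (Some bullet) ^ (n - j))) (at 0)"
    by (intro tendsto_intros tangent)
  then show "((\<lambda>h. inverse h *\<^sub>R (\<gamma> (t + h) (Some (bushy n)) - \<gamma> t (Some (bushy n)))) \<longlongrightarrow>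
      (\<Sum>j\<le>n. of_nat (n choose j) * x (Some (bushy j)) * \<gamma> t (Some bullet) ^ (n - j))) (at 0)"
    by (simp add: increment scaleR_sum_right)
qed

lemma bullet_linear: "\<gamma> t (Some bullet) = t *\<^sub>R x (Some bullet)"
proof -
  have "((\<lambda>t. \<gamma> t (Some bullet)) has_vector_derivative x (Some bullet)) (at t)" for t
    using bushy_has_vector_derivative[of 0 t] by simp
  moreover have "((\<lambda>t. t *\<^sub>R x (Some bullet)) has_vector_derivative x (Some bullet)) (at t)" for t
    using has_vector_derivative_scaleR[OF DERIV_ident
        has_vector_derivative_const[where c = "x (Some bullet)"], of t UNIV]
    by simp
  ultimately have "\<gamma> t (Some bullet) - \<gamma> 0 (Some bullet) = t *\<^sub>R x (Some bullet) - 0 *\<^sub>R x (Some bullet)"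
    by (rule same_vector_derivative_imp_same_increment)
  then show ?thesis
    by (simp add: zero bunit_def)
qed

lemma bushy_polynomial:
  "\<gamma> t (Some (bushy n)) =
    (\<Sum>j\<le>n. (real (n choose j) * t ^ (n - j + 1) / real (n - j + 1)) *\<^sub>R
        (x (Some (bushy j)) * x (Some bullet) ^ (n - j)))"
    (is "_ = ?P t")
proof -
  have "(?P has_vector_derivative
      (\<Sum>j\<le>n. of_nat (n choose j) * x (Some (bushy j)) * \<gamma> t (Some bullet) ^ (n - j))) (at t)" for t
  proof -
    have coefficient: "((\<lambda>t. real (n choose j) * t ^ (n - j + 1) / real (n - j + 1)) has_real_derivative
        real (n choose j) * t ^ (n - j)) (at t)" for j
      using DERIV_cmult[OF DERIV_pow[of "Suc (n - j)" t], of "real (n choose j) / real (Suc (n - j))"]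
      by (simp add: field_simps del: of_nat_Suc)
    have "(?P has_vector_derivative
        (\<Sum>j\<le>n. (real (n choose j) * t ^ (n - j)) *\<^sub>R (x (Some (bushy j)) * x (Some bullet) ^ (n - j)))) (at t)"
      by (intro has_vector_derivative_sum has_vector_derivative_eq_rhs[OF
          has_vector_derivative_scaleR[OF coefficient has_vector_derivative_const]]) simp
    then show ?thesis
      by (simp add: bullet_linear scaleR_conv_of_real power_mult_distrib mult_ac)
  qed
  with bushy_has_vector_derivative
  have "\<gamma> t (Some (bushy n)) - \<gamma> 0 (Some (bushy n)) = ?P t - ?P 0"
    by (rule same_vector_derivative_imp_same_increment)
  then show ?thesis
    by (simp add: zero bunit_def)
qed

end

lemma lie_exp_rel_one_parameter_group:
  assumes "lie_exp_rel x g"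
  obtains \<gamma> where "one_parameter_group \<gamma> x" and "\<gamma> 1 = g"
proof -
  obtain \<gamma> where BTM: "\<And>t. \<gamma> t \<in> BTM" and zero: "\<gamma> 0 = bunit"
    and add: "\<And>s t. \<gamma> (s + t) = bmult (\<gamma> s) (\<gamma> t)"
    and deriv: "has_derivM (\<lambda>t. chart (\<gamma> t)) x 0" and one: "\<gamma> 1 = g" and "x \<in> Mstar"
    using assms unfolding lie_exp_rel_def by blast
  have "((\<lambda>h. inverse h *\<^sub>R \<gamma> h (Some \<tau>)) \<longlongrightarrow> x (Some \<tau>)) (at 0)" for \<tau>
    using tendstoM_coordinate[OF \<open>x \<in> Mstar\<close> deriv[unfolded has_derivM_def], of "Some \<tau>"]
    by (simp add: chart_def zero bunit_def)
  moreover have "\<gamma> t None = 1" for t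
    using BTM[of t] by (simp add: BTM_def)
  ultimately have "one_parameter_group \<gamma> x"
    by unfold_locales (auto simp: zero add)
  with one show ?thesis
    using that by blast
qed

section \<open>The equations for the coefficients on bushy trees\<close>

(* The conditions g_0(1) = eps and g_n(1) = 0 for n > 0, where u j = x (Some (bushy j)) and
   x (Some bullet) = eps is already substituted in bushy_polynomial. *)
definition bushy_equations :: "real \<Rightarrow> (nat \<Rightarrow> 'k::real_normed_field) \<Rightarrow> bool" where
  "bushy_equations \<epsilon> u \<longleftrightarrow> u 0 = of_real \<epsilon> \<and>
     (\<forall>n>0. (\<Sum>j\<le>n. (real (n choose j) / real (n - j + 1)) *\<^sub>R (u j * of_real \<epsilon> ^ (n - j))) = 0)"

definition geometrically_bounded :: "(nat \<Rightarrow> 'a::real_normed_vector) \<Rightarrow> bool" where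
  "geometrically_bounded u \<longleftrightarrow> (\<exists>B K. \<forall>j. norm (u j) \<le> B * K ^ j)"

lemma lie_exp_rel_aeps_bushy_equations:
  assumes "lie_exp_rel x (aeps \<epsilon> :: rtree option \<Rightarrow> 'k::real_normed_field)"
  shows "bushy_equations \<epsilon> (\<lambda>j. x (Some (bushy j)))"
proof -
  obtain \<gamma> where "one_parameter_group \<gamma> x" and one: "\<gamma> 1 = aeps \<epsilon>"
    using assms by (rule lie_exp_rel_one_parameter_group)
  interpret one_parameter_group \<gamma> x
    by fact
  have bullet: "x (Some bullet) = of_real \<epsilon>"
    using bullet_linear[of 1] by (simp add: one aeps_def)
  have "\<gamma> 1 (Some (bushy n)) = 0" if "n > 0" for n
    using bushy_neq_bullet[of n] that by (simp add: one aeps_def)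
  then show ?thesis
    using bushy_polynomial[of 1] by (simp add: bushy_equations_def bullet)
qed

lemma Mstar_bushy_geometrically_bounded:
  assumes "x \<in> Mstar"
  shows "geometrically_bounded (\<lambda>j. x (Some (bushy j)))"
proof -
  obtain k where "x \<in> Estep k"
    using assms by (auto simp: Mstar_def)
  then obtain C where C: "\<And>t. norm (x t) / 2 ^ (k * tsize t) \<le> C"
    by (auto simp: Estep_def bdd_above_def)
  have "norm (x (Some (bushy j))) \<le> (C * 2 ^ k) * (2 ^ k) ^ j" for j
    using C[of "Some (bushy j)"]
    by (simp add: tsize_bushy pos_divide_le_eq power_mult[symmetric] power_add mult_ac)
  then show ?thesis
    unfolding geometrically_bounded_def by blast
qed

lemma aeps_in_exp_imageE:
  assumes "(aeps \<epsilon> :: rtree option \<Rightarrow> 'k) \<in> exp_image"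
  obtains u :: "nat \<Rightarrow> 'k::real_normed_field" where "bushy_equations \<epsilon> u" and "geometrically_bounded u"
proof -
  obtain x :: "rtree option \<Rightarrow> 'k" where "lie_exp_rel x (aeps \<epsilon>)"
    using assms by (auto simp: exp_image_def)
  then show ?thesis
    using that lie_exp_rel_aeps_bushy_equations Mstar_bushy_geometrically_bounded
    by (auto simp: lie_exp_rel_def)
qed

lemma summable_norm_exp_series_geometrically_bounded:
  fixes u :: "nat \<Rightarrow> 'a::real_normed_field"
  assumes "geometrically_bounded u"
  shows "summable (\<lambda>j. norm (u j * z ^ j / fact j))"
proof -
  obtain B K where bound: "\<And>j. norm (u j) \<le> B * K ^ j"
    using assms by (auto simp: geometrically_bounded_def)
  show ?thesis
  proof (rule summable_comparison_test')
    show "summable (\<lambda>j. B * (inverse (fact j) * (K * norm z) ^ j))"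
      by (intro summable_mult summable_exp)
    fix j :: nat
    have "norm (u j * z ^ j / fact j) \<le> B * K ^ j * norm z ^ j / fact j"
      unfolding norm_mult norm_divide norm_power norm_fact
      by (intro divide_right_mono mult_right_mono bound) auto
    then show "norm (norm (u j * z ^ j / fact j)) \<le> B * (inverse (fact j) * (K * norm z) ^ j)"
      by (simp add: power_mult_distrib divide_inverse mult_ac)
  qed
qed

lemma sums_exp_minus_one_div:
  fixes w :: "'a::{real_normed_field,banach}"
  assumes "w \<noteq> 0"
  shows "(\<lambda>m. w ^ m / fact (Suc m)) sums ((exp w - 1) / w)"
proof -
  have "(\<lambda>m. w ^ Suc m /\<^sub>R fact (Suc m)) sums (exp w - 1)"
    using exp_converges[of w] by (subst sums_Suc_iff) simp
  then have "(\<lambda>m. inverse w * (w ^ Suc m /\<^sub>R fact (Suc m))) sums (inverse w * (exp w - 1))"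
    by (rule sums_mult)
  moreover have "inverse w * (w ^ Suc m /\<^sub>R fact (Suc m)) = w ^ m / fact (Suc m)" for m
    using assms by (simp add: scaleR_conv_of_real divide_inverse)
  ultimately show ?thesis
    by (simp add: divide_inverse mult.commute)
qed

lemma exp_series_product_term:
  fixes c z :: "'a::real_normed_field"
  assumes "i \<le> k"
  shows "c * z ^ i / fact i * ((e * z) ^ (k - i) / fact (Suc (k - i))) =
    z ^ k / fact k * ((real (k choose i) / real (k - i + 1)) *\<^sub>R (c * e ^ (k - i)))"
proof -
  have "z ^ k = z ^ i * z ^ (k - i)"
    using assms by (simp flip: power_add)
  moreover have "fact (Suc (k - i)) = (of_nat (Suc (k - i)) :: 'a) * fact (k - i)"
    by simp
  moreover have "(of_nat (k choose i) :: 'a) = fact k / (fact i * fact (k - i))"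
    using assms by (rule binomial_fact)
  ultimately show ?thesis
    unfolding scaleR_conv_of_real of_real_divide of_real_of_nat_eq
    by (simp add: field_simps power_mult_distrib del: of_nat_Suc)
qed

lemma bushy_equations_not_geometrically_bounded:
  fixes u :: "nat \<Rightarrow> complex"
  assumes "\<epsilon> \<noteq> 0" and eqs: "bushy_equations \<epsilon> u"
  shows "\<not> geometrically_bounded u"
proof
  assume bounded: "geometrically_bounded u"
  define w :: complex where "w = 2 * of_real pi * \<i>"
  define z :: complex where "z = w / of_real \<epsilon>"
  define a where "a = (\<lambda>j. u j * z ^ j / fact j)"
  define b where "b = (\<lambda>m. w ^ m / fact (Suc m))"
  have "w \<noteq> 0" and "exp w = 1"
    by (simp_all add: w_def)
  then have b_sums: "b sums 0"
    using sums_exp_minus_one_div[of w] by (simp add: b_def)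
  have "summable (\<lambda>m. norm w ^ m / fact (Suc m))"
    using sums_summable[OF sums_exp_minus_one_div[of "norm w"]] \<open>w \<noteq> 0\<close> by simp
  then have "summable (\<lambda>m. norm (b m))"
    by (simp add: b_def norm_divide norm_power norm_fact del: fact_Suc)
  with summable_norm_exp_series_geometrically_bounded[OF bounded]
  have "(\<lambda>k. \<Sum>i\<le>k. a i * b (k - i)) sums ((\<Sum>k. a k) * (\<Sum>k. b k))"
    unfolding a_def by (rule Cauchy_product_sums)
  then have "(\<lambda>k. \<Sum>i\<le>k. a i * b (k - i)) sums 0"
    using sums_unique[OF b_sums] by simp
  moreover have "(\<Sum>i\<le>k. a i * b (k - i)) = (if k = 0 then of_real \<epsilon> else 0)" for k
  proof -
    have "w = of_real \<epsilon> * z"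
      using \<open>\<epsilon> \<noteq> 0\<close> by (simp add: z_def)
    then have "a i * b (k - i) =
        z ^ k / fact k * ((real (k choose i) / real (k - i + 1)) *\<^sub>R (u i * of_real \<epsilon> ^ (k - i)))"
      if "i \<le> k" for i
      unfolding a_def b_def using exp_series_product_term[OF that] by simp
    then have "(\<Sum>i\<le>k. a i * b (k - i)) = z ^ k / fact k *
        (\<Sum>i\<le>k. (real (k choose i) / real (k - i + 1)) *\<^sub>R (u i * of_real \<epsilon> ^ (k - i)))"
      by (simp add: sum_distrib_left)
    then show ?thesis
      using eqs by (simp add: bushy_equations_def a_def b_def)
  qed
  ultimately have "(\<lambda>k. if k = 0 then complex_of_real \<epsilon> else 0) sums 0"
    by simp
  then have "complex_of_real \<epsilon> = 0"
    using sums_single[of 0 "\<lambda>_. complex_of_real \<epsilon>"] sums_unique2 by force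
  with \<open>\<epsilon> \<noteq> 0\<close> show False
    by simp
qed

lemma bushy_equations_of_real:
  assumes "bushy_equations \<epsilon> u"
  shows "bushy_equations \<epsilon> (\<lambda>j. of_real (u j) :: 'k::real_normed_field)"
proof -
  have "(\<Sum>j\<le>n. c j *\<^sub>R (of_real (u j) * of_real \<epsilon> ^ (n - j)) :: 'k) =
      of_real (\<Sum>j\<le>n. c j *\<^sub>R (u j * \<epsilon> ^ (n - j)))" for c n
    by (simp add: scaleR_conv_of_real)
  then show ?thesis
    using assms unfolding bushy_equations_def by (simp only: of_real_eq_iff of_real_eq_0_iff) simp
qed

lemma aeps_notin_exp_image_complex:
  assumes "\<epsilon> \<noteq> 0"
  shows "(aeps \<epsilon> :: rtree option \<Rightarrow> complex) \<notin> exp_image"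
  using aeps_in_exp_imageE bushy_equations_not_geometrically_bounded[OF assms] by metis

lemma aeps_notin_exp_image_real:
  assumes "\<epsilon> \<noteq> 0"
  shows "(aeps \<epsilon> :: rtree option \<Rightarrow> real) \<notin> exp_image"
proof
  assume "(aeps \<epsilon> :: rtree option \<Rightarrow> real) \<in> exp_image"
  then obtain u :: "nat \<Rightarrow> real" where "bushy_equations \<epsilon> u" and "geometrically_bounded u"
    by (rule aeps_in_exp_imageE)
  then have "bushy_equations \<epsilon> (\<lambda>j. complex_of_real (u j))"
    and "geometrically_bounded (\<lambda>j. complex_of_real (u j))"
    by (simp_all add: bushy_equations_of_real geometrically_bounded_def)
  with bushy_equations_not_geometrically_bounded[OF assms] show False
    by blast
qed

section \<open>The curve of the elements a_\<epsilon>\<close>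

lemma aeps_BTM: "(aeps \<epsilon> :: rtree option \<Rightarrow> 'k::real_normed_field) \<in> BTM"
proof -
  have "norm (aeps \<epsilon> t :: 'k) \<le> (1 + \<bar>\<epsilon>\<bar>) * 1 ^ tsize t" for t
    by (cases t) (auto simp: aeps_def)
  then have "tame (aeps \<epsilon> :: rtree option \<Rightarrow> 'k)"
    unfolding tame_def by (intro exI[of _ "1 + \<bar>\<epsilon>\<bar>"] exI[of _ "1::real"]) simp
  then show ?thesis
    by (simp add: BTM_def aeps_def)
qed

lemma aeps_0: "aeps 0 = bunit"
  by (auto simp: aeps_def bunit_def split: option.splits)

lemma chart_aeps: "chart (aeps \<epsilon>) t = (if t = Some bullet then of_real \<epsilon> else 0)"
  by (auto simp: chart_def aeps_def bunit_def split: option.splits)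

lemma chart_aeps_in_Estep: "chart (aeps \<epsilon> :: rtree option \<Rightarrow> 'k::real_normed_field) \<in> Estep 0"
proof -
  have "norm (chart (aeps \<epsilon> :: rtree option \<Rightarrow> 'k) t) / 2 ^ (0 * tsize t) \<le> \<bar>\<epsilon>\<bar>" for t
    by (simp add: chart_aeps)
  then have "bdd_above (range (\<lambda>t. norm (chart (aeps \<epsilon> :: rtree option \<Rightarrow> 'k) t) / 2 ^ (0 * tsize t)))"
    by (rule bdd_aboveI2)
  then show ?thesis
    unfolding Estep_def by (simp add: chart_aeps)
qed

lemma wnorm_chart_aeps_diff:
  "wnorm 0 (\<lambda>t. chart (aeps \<delta>) t - chart (aeps \<epsilon> :: rtree option \<Rightarrow> 'k::real_normed_field) t) \<le> \<bar>\<delta> - \<epsilon>\<bar>"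
  unfolding wnorm_def
proof (rule cSUP_least)
  fix t
  have "norm (of_real \<delta> - of_real \<epsilon> :: 'k) = \<bar>\<delta> - \<epsilon>\<bar>"
    by (metis norm_of_real of_real_diff)
  then show "norm (chart (aeps \<delta>) t - chart (aeps \<epsilon> :: rtree option \<Rightarrow> 'k) t) / 2 ^ (0 * tsize t)
      \<le> \<bar>\<delta> - \<epsilon>\<bar>"
    by (simp add: chart_aeps)
qed simp

lemma inj_chart: "inj chart"
proof (rule injI)
  fix a b :: "rtree option \<Rightarrow> 'k::real_normed_field"
  assume "chart a = chart b"
  then have "chart a t = chart b t" for t
    by simp
  then show "a = b"
    by (simp add: chart_def fun_eq_iff)
qed

lemma open_aeps_preimage:
  assumes "openG V"
  shows "open {\<epsilon>. (aeps \<epsilon> :: rtree option \<Rightarrow> 'k::real_normed_field) \<in> V}"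
  unfolding open_dist
proof (intro ballI)
  fix \<epsilon> assume "\<epsilon> \<in> {\<epsilon>. (aeps \<epsilon> :: rtree option \<Rightarrow> 'k) \<in> V}"
  then have "chart (aeps \<epsilon> :: rtree option \<Rightarrow> 'k) \<in> chart ` V \<inter> Estep 0"
    using chart_aeps_in_Estep by auto
  with assms obtain r where "r > 0" and ball: "\<And>b. b \<in> Estep 0 \<Longrightarrow>
      wnorm 0 (\<lambda>t. b t - chart (aeps \<epsilon> :: rtree option \<Rightarrow> 'k) t) < r \<Longrightarrow> b \<in> chart ` V"
    unfolding openG_def openM_def by meson
  show "\<exists>r>0. \<forall>\<delta>. dist \<delta> \<epsilon> < r \<longrightarrow> \<delta> \<in> {\<epsilon>. (aeps \<epsilon> :: rtree option \<Rightarrow> 'k) \<in> V}"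
  proof (intro exI[of _ r] conjI \<open>r > 0\<close> allI impI)
    fix \<delta> assume "dist \<delta> \<epsilon> < r"
    then have "chart (aeps \<delta> :: rtree option \<Rightarrow> 'k) \<in> chart ` V"
      using wnorm_chart_aeps_diff[of \<delta> \<epsilon>, where 'k = 'k]
      by (intro ball chart_aeps_in_Estep) (simp add: dist_real_def)
    then show "\<delta> \<in> {\<epsilon>. (aeps \<epsilon> :: rtree option \<Rightarrow> 'k) \<in> V}"
      by (simp add: inj_image_mem_iff[OF inj_chart])
  qed
qed

lemma exp_image_not_nhd:
  assumes "\<And>\<epsilon>. \<epsilon> \<noteq> 0 \<Longrightarrow> (aeps \<epsilon> :: rtree option \<Rightarrow> 'k::real_normed_field) \<notin> exp_image"
  shows "\<not> (\<exists>V. openG V \<and> bunit \<in> V \<and> V \<subseteq> (exp_image :: (rtree option \<Rightarrow> 'k) set))"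
proof
  assume "\<exists>V. openG V \<and> bunit \<in> V \<and> V \<subseteq> (exp_image :: (rtree option \<Rightarrow> 'k) set)"
  then obtain V where "openG V" "bunit \<in> V" "V \<subseteq> (exp_image :: (rtree option \<Rightarrow> 'k) set)"
    by blast
  then have "{\<epsilon>. (aeps \<epsilon> :: rtree option \<Rightarrow> 'k) \<in> V} = {0}"
    using assms by (auto simp: aeps_0)
  with open_aeps_preimage[OF \<open>openG V\<close>] show False
    by (metis not_open_singleton)
qed

theorem proposition5p6:
  shows "(\<forall>\<epsilon>::real. \<epsilon> \<noteq> 0 \<longrightarrow>
            (aeps \<epsilon> :: rtree option \<Rightarrow> real) \<in> BTM \<and> aeps \<epsilon> \<notin> (exp_image :: (rtree option \<Rightarrow> real) set))
      \<and> (aeps 0 :: rtree option \<Rightarrow> real) = bunit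
      \<and> (\<forall>V. openG V \<longrightarrow> openin (euclidean :: real topology) {\<epsilon>. (aeps \<epsilon> :: rtree option \<Rightarrow> real) \<in> V})
      \<and> \<not> (\<exists>V. openG V \<and> bunit \<in> V \<and> V \<subseteq> (exp_image :: (rtree option \<Rightarrow> real) set))
      \<and> \<not> (\<exists>V. openG V \<and> bunit \<in> V \<and> V \<subseteq> (exp_image :: (rtree option \<Rightarrow> complex) set))"
  by (intro conjI allI impI aeps_BTM aeps_0 aeps_notin_exp_image_real exp_image_not_nhd
      aeps_notin_exp_image_complex) (simp_all add: open_aeps_preimage)

end
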